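(* Let $k\in\mathbb N$, $a=\pi/k$, $\alpha,\beta\in\{0,1\}$, $q\in L_2(0,\pi)$, and let $W_{\alpha,\beta}=\frac{(-1)^{\alpha\beta}}{2}Q^{-1}A_{\alpha,\beta}Rq$ (notation in the context). In the non-degenerate case the following hold for a.e. $x\in(0,a)$: (iv) if $\alpha=0$, $\beta=1$: $q(x)=W_{0,1}(x)+\sum_{j=1}^{(k-1)/2}\big(W_{0,1}(2ja+x)-W_{0,1}(2ja-x)\big)$ when $k$ is odd, and $q(x)=\sum_{j=1}^{k/2}\big(W_{0,1}((2j-1)a+x)-W_{0,1}((2j-1)a-x)\big)$ when $k$ is even; (v) if $\alpha=1$, $\beta=0$ and $k$ is even: $q(x)=\sum_{j=1}^{k/2}(-1)^j\big(W_{1,0}((k+1-2j)a-x)+W_{1,0}((k+1-2j)a+x)\big)$; (vi) if $\alpha=\beta=1$ and $k$ is odd: $q(x)=(-1)^{\frac{k+1}2}\Big(W_{1,1}(x)+\sum_{j=1}^{(k-1)/2}(-1)^j\big(W_{1,1}(2ja+x)+W_{1,1}(2ja-x)\big)\Big)$.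
   Context: For $f\in L_2(0,\pi)$, $t\in(0,a)$, $m=1,\dots,k$: $R_mf(t)=f(t+(k-m)a)$ for odd $m$ and $R_mf(t)=f((k-m+1)a-t)$ for even $m$; $Q_mf(t)=f(t+(m-1)a)$ for odd $m$ and $Q_mf(t)=f(ma-t)$ for even $m$. The (invertible) operators $R,Q:L_2(0,\pi)\to(L_2(0,a))^k$ are $Rf=(R_1f,\dots,R_kf)^T$, $Qf=(Q_1f,\dots,Q_kf)^T$. Let $b=(-1)^{\alpha+\beta}$, $c=(-1)^{1+\beta}$. For $k>1$, $A_{\alpha,\beta}$ is the $k\times k$ tridiagonal matrix whose $(1,1)$ entry is $1$, whose $(k,k)$ entry is $c$, whose other diagonal entries are $0$, whose superdiagonal entries are all $b$ and whose subdiagonal entries are all $c$; for $k=1$, $A_{\alpha,\beta}=2(-1)^{\alpha(\beta+1)}\delta_{1,\beta}$. The non-degenerate case means one of: (iv) $\alpha=0,\beta=1$; (v) $\alpha=1,\beta=0$, $k$ even; (vi) $\alpha=\beta=1$, $k$ odd. *)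

theory Defs
  imports "HOL-Analysis.Analysis"
begin

text \<open>Membership in L_2(0,pi) (functions are represented pointwise; a.e.-equivalence
  is handled by stating conclusions almost everywhere).\<close>
definition in_L2 :: "(real \<Rightarrow> complex) \<Rightarrow> real \<Rightarrow> real \<Rightarrow> bool" where
  "in_L2 f l u \<longleftrightarrow> f \<in> borel_measurable (lebesgue_on {l<..<u})
     \<and> integrable (lebesgue_on {l<..<u}) (\<lambda>x. (norm (f x))^2)"

definition stp :: "nat \<Rightarrow> real" where "stp k = pi / real k"

text \<open>Operator R: component m (1 \<le> m \<le> k), as a function on (0,a).\<close>
definition Rop :: "nat \<Rightarrow> (real \<Rightarrow> complex) \<Rightarrow> nat \<Rightarrow> real \<Rightarrow> complex" where
  "Rop k f m t = (if odd m then f (t + real (k - m) * stp k)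
                   else f (real (k - m + 1) * stp k - t))"

text \<open>Operator Q: component m (1 \<le> m \<le> k), as a function on (0,a).\<close>
definition Qop :: "nat \<Rightarrow> (real \<Rightarrow> complex) \<Rightarrow> nat \<Rightarrow> real \<Rightarrow> complex" where
  "Qop k f m t = (if odd m then f (t + real (m - 1) * stp k)
                   else f (real m * stp k - t))"

text \<open>Inverse of Q: given g = (g_1,...,g_k) on (0,a), the function on (0,pi) whose
  restriction to ((m-1)a, ma) is determined by Q_m f = g_m
  (values at the points j*a are irrelevant, being a null set).\<close>
definition Qinv :: "nat \<Rightarrow> (nat \<Rightarrow> real \<Rightarrow> complex) \<Rightarrow> real \<Rightarrow> complex" where
  "Qinv k g x = (let m = nat \<lfloor>x / stp k\<rfloor> + 1 in
                  if odd m then g m (x - real (m - 1) * stp k)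
                  else g m (real m * stp k - x))"

definition Amat :: "nat \<Rightarrow> nat \<Rightarrow> nat \<Rightarrow> nat \<Rightarrow> nat \<Rightarrow> complex" where
  "Amat \<alpha> \<beta> k i j =
    (let b = (-1::complex) ^ (\<alpha> + \<beta>); c = (-1::complex) ^ (1 + \<beta>) in
     if k = 1 then 2 * (-1) ^ (\<alpha> * (\<beta> + 1)) * (if \<beta> = 1 then 1 else 0)
     else if i = j then (if i = 1 then 1 else if i = k then c else 0)
     else if j = i + 1 then b
     else if i = j + 1 then c
     else 0)"

definition Aapp :: "nat \<Rightarrow> nat \<Rightarrow> nat \<Rightarrow> (nat \<Rightarrow> real \<Rightarrow> complex) \<Rightarrow> nat \<Rightarrow> real \<Rightarrow> complex" where
  "Aapp \<alpha> \<beta> k g i t = (\<Sum>j=1..k. Amat \<alpha> \<beta> k i j * g j t)"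

definition Wfun :: "nat \<Rightarrow> nat \<Rightarrow> nat \<Rightarrow> (real \<Rightarrow> complex) \<Rightarrow> real \<Rightarrow> complex" where
  "Wfun \<alpha> \<beta> k q x = ((-1) ^ (\<alpha> * \<beta>) / 2) * Qinv k (Aapp \<alpha> \<beta> k (Rop k q)) x"

definition nondegenerate :: "nat \<Rightarrow> nat \<Rightarrow> nat \<Rightarrow> bool" where
  "nondegenerate \<alpha> \<beta> k \<longleftrightarrow> (\<alpha> = 0 \<and> \<beta> = 1) \<or> (\<alpha> = 1 \<and> \<beta> = 0 \<and> even k)
      \<or> (\<alpha> = 1 \<and> \<beta> = 1 \<and> odd k)"

end

theory Submission
  imports Defs
begin

text \<open>For \<open>0 < x < a\<close> the points \<open>m a + x\<close> and \<open>m a - x\<close> lie in the \<open>(m+1)\<close>-th and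
  \<open>m\<close>-th cell of the partition of \<open>(0,\<pi>)\<close>, where \<open>Q\<^sup>-\<^sup>1\<close> reads off the corresponding
  component of \<open>A\<^sub>\<alpha>\<^sub>\<beta> R q\<close> at \<open>x\<close> or \<open>a - x\<close>, depending on the parity of \<open>m\<close>.
  Each right-hand side is therefore a fixed combination of rows of \<open>A\<^sub>\<alpha>\<^sub>\<beta>\<close> applied to
  \<open>R q\<close> at a single point. In the non-degenerate cases the tridiagonal structure makes this
  combination telescope to twice the last component, and \<open>(R q)\<^sub>k\<close> at that point is \<open>q x\<close>.
  The identities hold at every \<open>x \<in> (0,a)\<close>.\<close>

lemma stp_pos: "k \<ge> 1 \<Longrightarrow> stp k > 0"
  by (simp add: stp_def)

lemma Qinv_node_plus:
  assumes "k \<ge> 1" "0 < x" "x < stp k"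
  shows "Qinv k g (real m * stp k + x) = g (Suc m) (if even m then x else stp k - x)"
proof -
  have node: "\<lfloor>(real m * stp k + x) / stp k\<rfloor> = int m"
    using assms stp_pos[OF assms(1)] by (simp add: floor_eq_iff field_simps)
  show ?thesis
    unfolding Qinv_def Let_def node by (auto simp: algebra_simps)
qed

lemma Qinv_node_minus:
  assumes "k \<ge> 1" "0 < x" "x < stp k" "m \<ge> 1"
  shows "Qinv k g (real m * stp k - x) = g m (if odd m then stp k - x else x)"
proof -
  have "(real m * stp k - x) / stp k = real (m - 1) + (1 - x / stp k)"
    using assms stp_pos[OF assms(1)] by (simp add: field_simps)
  then have node: "\<lfloor>(real m * stp k - x) / stp k\<rfloor> = int (m - 1)"
    using assms stp_pos[OF assms(1)] by (simp add: floor_eq_iff)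
  have "nat (int (m - 1)) + 1 = m"
    using assms(4) by simp
  then show ?thesis
    unfolding Qinv_def Let_def node using assms(4) by (auto simp: algebra_simps of_nat_diff)
qed

lemma Wfun_node_plus:
  assumes "k \<ge> 1" "0 < x" "x < stp k"
  shows "Wfun \<alpha> \<beta> k q (real m * stp k + x) =
    (-1) ^ (\<alpha> * \<beta>) / 2 * Aapp \<alpha> \<beta> k (Rop k q) (Suc m) (if even m then x else stp k - x)"
  using Qinv_node_plus[OF assms] by (simp add: Wfun_def)

lemma Wfun_node_minus:
  assumes "k \<ge> 1" "0 < x" "x < stp k" "m \<ge> 1"
  shows "Wfun \<alpha> \<beta> k q (real m * stp k - x) =
    (-1) ^ (\<alpha> * \<beta>) / 2 * Aapp \<alpha> \<beta> k (Rop k q) m (if odd m then stp k - x else x)"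
  using Qinv_node_minus[OF assms] by (simp add: Wfun_def)

lemma Rop_last: "k \<ge> 1 \<Longrightarrow> Rop k q k (if odd k then x else stp k - x) = q x"
  by (simp add: Rop_def)

text \<open>Components outside \<open>1..k\<close> are read as \<open>0\<close>, so that the boundary rows of the
  tridiagonal matrix follow the interior pattern.\<close>

definition extend0 :: "nat \<Rightarrow> (nat \<Rightarrow> complex) \<Rightarrow> nat \<Rightarrow> complex" where
  "extend0 k v i = (if 1 \<le> i \<and> i \<le> k then v i else 0)"

lemma Aapp_tridiagonal:
  fixes g :: "nat \<Rightarrow> real \<Rightarrow> complex" and t :: real
  assumes "k \<ge> 2" "1 \<le> i" "i \<le> k"
  defines "v \<equiv> extend0 k (\<lambda>j. g j t)"
  shows "Aapp \<alpha> \<beta> k g i t = (if i = 1 then v 1 else 0) + (if i = k then (-1) ^ (1 + \<beta>) * v k else 0)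
     + (-1) ^ (1 + \<beta>) * v (i - 1) + (-1) ^ (\<alpha> + \<beta>) * v (i + 1)"
proof -
  have "Aapp \<alpha> \<beta> k g i t = (\<Sum>j=1..k.
        (if j = i then ((if i = 1 then 1 else 0) + (if i = k then (-1) ^ (1 + \<beta>) else 0)) * g j t else 0)
      + (if j = i + 1 then (-1) ^ (\<alpha> + \<beta>) * g j t else 0)
      + (if j = i - 1 \<and> i \<ge> 2 then (-1) ^ (1 + \<beta>) * g j t else 0))"
    unfolding Aapp_def using assms by (intro sum.cong) (auto simp: Amat_def Let_def)
  also have "\<dots> = (if i = 1 then v 1 else 0) + (if i = k then (-1) ^ (1 + \<beta>) * v k else 0)
     + (-1) ^ (1 + \<beta>) * v (i - 1) + (-1) ^ (\<alpha> + \<beta>) * v (i + 1)"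
    using assms by (cases "i = 1") (auto simp: sum.distrib extend0_def distrib_right)
  finally show ?thesis .
qed

lemma Aapp_01_odd_recovers_last:
  fixes g :: "nat \<Rightarrow> real \<Rightarrow> complex" and t :: real
  assumes "k = 2 * n + 1"
  shows "Aapp 0 1 k g 1 t + (\<Sum>j=1..n. Aapp 0 1 k g (2 * j + 1) t - Aapp 0 1 k g (2 * j) t) = 2 * g k t"
proof (cases "n = 0")
  case True
  then show ?thesis using assms by (simp add: Aapp_def Amat_def)
next
  case False
  then have k: "k \<ge> 2" using assms by simp
  define v where "v = extend0 k (\<lambda>j. g j t)"
  define E where "E j = v (2 * j - 1) - v (2 * j)" for j
  have "(\<Sum>j=1..n. Aapp 0 1 k g (2 * j + 1) t - Aapp 0 1 k g (2 * j) t)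
      = (\<Sum>j=1..n. E (Suc j) - E j + (if j = n then v k else 0))"
    using Aapp_tridiagonal[OF k, where g = g and t = t and \<alpha> = 0 and \<beta> = 1] assms
    by (intro sum.cong) (auto simp: v_def E_def)
  also have "\<dots> = E (Suc n) - E 1 + v k"
    using False by (simp add: sum.distrib sum_Suc_diff)
  finally show ?thesis
    using Aapp_tridiagonal[OF k, where i = 1 and g = g and t = t and \<alpha> = 0 and \<beta> = 1] assms False
    by (simp add: v_def E_def extend0_def eval_nat_numeral)
qed

lemma Aapp_01_even_recovers_last:
  fixes g :: "nat \<Rightarrow> real \<Rightarrow> complex" and t :: real
  assumes "k = 2 * n" "n \<ge> 1"
  shows "(\<Sum>j=1..n. Aapp 0 1 k g (2 * j) t - Aapp 0 1 k g (2 * j - 1) t) = 2 * g k t"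
proof -
  have k: "k \<ge> 2" using assms by simp
  define v where "v = extend0 k (\<lambda>j. g j t)"
  define E where "E j = v (2 * j - 2) - v (2 * j - 1)" for j
  have "(\<Sum>j=1..n. Aapp 0 1 k g (2 * j) t - Aapp 0 1 k g (2 * j - 1) t)
      = (\<Sum>j=1..n. E (Suc j) - E j + (if j = n then v k else 0) - (if j = 1 then v 1 else 0))"
  proof (intro sum.cong)
    fix j assume j: "j \<in> {1..n}"
    define m where "m = 2 * (j - 1)"
    have m: "2 * j = m + 2" "2 * j - 1 = m + 1"
        "m + 2 \<le> k" "m + 1 = 1 \<longleftrightarrow> j = 1" "m + 2 = k \<longleftrightarrow> j = n"
      using j assms by (auto simp: m_def)
    have A2: "Aapp 0 1 k g (2 * j) t = (if j = n then v k else 0) + v (m + 1) - v (m + 3)"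
      using Aapp_tridiagonal[OF k, where i = "m + 2" and g = g and t = t and \<alpha> = 0 and \<beta> = 1] m
      by (auto simp: v_def eval_nat_numeral)
    have A1: "Aapp 0 1 k g (2 * j - 1) t = (if j = 1 then v 1 else 0) + v m - v (m + 2)"
      using Aapp_tridiagonal[OF k, where i = "m + 1" and g = g and t = t and \<alpha> = 0 and \<beta> = 1] m
      by (auto simp: v_def)
    have E: "E j = v m - v (m + 1)" "E (Suc j) = v (m + 2) - v (m + 3)"
    proof -
      obtain i where "j = Suc i" using j by (cases j) auto
      then show "E j = v m - v (m + 1)" "E (Suc j) = v (m + 2) - v (m + 3)"
        by (simp_all add: E_def m_def eval_nat_numeral)
    qed
    show "Aapp 0 1 k g (2 * j) t - Aapp 0 1 k g (2 * j - 1) t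
        = E (Suc j) - E j + (if j = n then v k else 0) - (if j = 1 then v 1 else 0)"
      unfolding A1 A2 E by (simp add: algebra_simps)
  qed simp
  also have "\<dots> = E (Suc n) - E 1 + v k - v 1"
    using assms sum_Suc_diff[of 1 n E] by (simp add: sum.distrib sum_subtractf)
  finally show ?thesis
    using assms by (simp add: v_def E_def extend0_def)
qed

lemma Aapp_10_even_recovers_last:
  fixes g :: "nat \<Rightarrow> real \<Rightarrow> complex" and t :: real
  assumes "k = 2 * n" "n \<ge> 1"
  shows "(\<Sum>j=1..n. (-1) ^ j * (Aapp 1 0 k g (2 * (n - j) + 1) t + Aapp 1 0 k g (2 * (n - j) + 2) t))
    = 2 * g k t"
proof -
  have k: "k \<ge> 2" using assms by simp
  define v where "v = extend0 k (\<lambda>j. g j t)"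
  define F where "F j = (-1) ^ j * (v (2 * (n - j)) + v (2 * (n - j) + 1))" for j
  have "(\<Sum>j=1..n. (-1) ^ j * (Aapp 1 0 k g (2 * (n - j) + 1) t + Aapp 1 0 k g (2 * (n - j) + 2) t))
      = (\<Sum>j=1..n. (if j = n then (-1) ^ n * v 1 else 0) + (if j = 1 then v k else 0) - (F j - F (j - 1)))"
  proof (intro sum.cong)
    fix j assume j: "j \<in> {1..n}"
    define m where "m = 2 * (n - j)"
    have m: "2 * (n - j) + 1 = m + 1" "2 * (n - j) + 2 = m + 2"
        "m + 2 \<le> k" "m + 1 = 1 \<longleftrightarrow> j = n" "m + 2 = k \<longleftrightarrow> j = 1"
      using j assms by (auto simp: m_def)
    have A1: "Aapp 1 0 k g (2 * (n - j) + 1) t = (if j = n then v 1 else 0) - v m - v (m + 2)"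
      using Aapp_tridiagonal[OF k, where i = "m + 1" and g = g and t = t and \<alpha> = 1 and \<beta> = 0] m
      by (auto simp: v_def m_def)
    have A2: "Aapp 1 0 k g (2 * (n - j) + 2) t = - (if j = 1 then v k else 0) - v (m + 1) - v (m + 3)"
      using Aapp_tridiagonal[OF k, where i = "m + 2" and g = g and t = t and \<alpha> = 1 and \<beta> = 0] m
      by (auto simp: v_def eval_nat_numeral)
    have F: "F j = (-1) ^ j * (v m + v (m + 1))" "F (j - 1) = (-1) ^ Suc j * (v (m + 2) + v (m + 3))"
    proof -
      obtain i where i: "j = Suc i" "Suc i \<le> n" using j by (cases j) auto
      then have "2 * (n - i) = m + 2" by (simp add: m_def)
      then show "F j = (-1) ^ j * (v m + v (m + 1))" "F (j - 1) = (-1) ^ Suc j * (v (m + 2) + v (m + 3))"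
        using i by (simp_all add: F_def m_def eval_nat_numeral)
    qed
    show "(-1) ^ j * (Aapp 1 0 k g (2 * (n - j) + 1) t + Aapp 1 0 k g (2 * (n - j) + 2) t)
        = (if j = n then (-1) ^ n * v 1 else 0) + (if j = 1 then v k else 0) - (F j - F (j - 1))"
      unfolding A1 A2 F by (simp add: algebra_simps)
  qed simp
  also have "\<dots> = (-1) ^ n * v 1 + v k - (F n - F 0)"
    using assms sum_telescope''[of 0 n F] by (simp add: sum.distrib sum_subtractf)
  finally show ?thesis
    using assms by (simp add: v_def F_def extend0_def)
qed

lemma Aapp_11_odd_recovers_last:
  fixes g :: "nat \<Rightarrow> real \<Rightarrow> complex" and t :: real
  assumes "k = 2 * n + 1"
  shows "Aapp 1 1 k g 1 t + (\<Sum>j=1..n. (-1) ^ j * (Aapp 1 1 k g (2 * j + 1) t + Aapp 1 1 k g (2 * j) t))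
    = 2 * (-1) ^ n * g k t"
proof (cases "n = 0")
  case True
  then show ?thesis using assms by (simp add: Aapp_def Amat_def)
next
  case False
  then have k: "k \<ge> 2" using assms by simp
  define v where "v = extend0 k (\<lambda>j. g j t)"
  define F where "F j = (-1) ^ Suc j * (v (2 * j - 1) + v (2 * j))" for j
  have "(\<Sum>j=1..n. (-1) ^ j * (Aapp 1 1 k g (2 * j + 1) t + Aapp 1 1 k g (2 * j) t))
      = (\<Sum>j=1..n. F (Suc j) - F j + (if j = n then (-1) ^ n * v k else 0))"
    using Aapp_tridiagonal[OF k, where g = g and t = t and \<alpha> = 1 and \<beta> = 1] assms
    by (intro sum.cong) (auto simp: v_def F_def algebra_simps)
  also have "\<dots> = F (Suc n) - F 1 + (-1) ^ n * v k"
    using False by (simp add: sum.distrib sum_Suc_diff)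
  finally show ?thesis
    using Aapp_tridiagonal[OF k, where i = 1 and g = g and t = t and \<alpha> = 1 and \<beta> = 1] assms False
    by (simp add: v_def F_def extend0_def eval_nat_numeral)
qed

lemma reconstruction_01_odd:
  assumes "odd k" "0 < x" "x < stp k"
  shows "q x = Wfun 0 1 k q x + (\<Sum>j=1..(k - 1) div 2.
    Wfun 0 1 k q (2 * real j * stp k + x) - Wfun 0 1 k q (2 * real j * stp k - x))"
proof -
  obtain n where k: "k = 2 * n + 1" using assms(1) oddE by blast
  then have "k \<ge> 1" and n: "(k - 1) div 2 = n" by simp_all
  note plus = Wfun_node_plus[OF \<open>k \<ge> 1\<close> assms(2,3), where \<alpha> = 0 and \<beta> = 1 and q = q]
  note minus = Wfun_node_minus[OF \<open>k \<ge> 1\<close> assms(2,3), where \<alpha> = 0 and \<beta> = 1 and q = q]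
  let ?A = "\<lambda>i. Aapp 0 1 k (Rop k q) i x"
  have centre: "Wfun 0 1 k q x = ?A 1 / 2"
    using plus[where m = 0] by simp
  have "Wfun 0 1 k q (2 * real j * stp k + x) - Wfun 0 1 k q (2 * real j * stp k - x)
      = (?A (2 * j + 1) - ?A (2 * j)) / 2" if "j \<ge> 1" for j
  proof -
    have pts: "2 * real j * stp k + x = real (2 * j) * stp k + x"
      "2 * real j * stp k - x = real (2 * j) * stp k - x"
      by simp_all
    have "1 \<le> 2 * j" using that by simp
    then show ?thesis
      unfolding pts plus minus[OF \<open>1 \<le> 2 * j\<close>] by (simp add: diff_divide_distrib)
  qed
  then have "(\<Sum>j=1..n. Wfun 0 1 k q (2 * real j * stp k + x) - Wfun 0 1 k q (2 * real j * stp k - x))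
      = (\<Sum>j=1..n. ?A (2 * j + 1) - ?A (2 * j)) / 2"
    unfolding sum_divide_distrib by (intro sum.cong refl) simp
  then have "Wfun 0 1 k q x + (\<Sum>j=1..(k - 1) div 2.
      Wfun 0 1 k q (2 * real j * stp k + x) - Wfun 0 1 k q (2 * real j * stp k - x))
    = (?A 1 + (\<Sum>j=1..n. ?A (2 * j + 1) - ?A (2 * j))) / 2"
    unfolding n centre by (simp add: add_divide_distrib)
  also have "\<dots> = Rop k q k x"
    using Aapp_01_odd_recovers_last[OF k] by simp
  finally show ?thesis
    using Rop_last[OF \<open>k \<ge> 1\<close>, of q x] k by simp
qed

lemma reconstruction_01_even:
  assumes "even k" "k \<ge> 1" "0 < x" "x < stp k"
  shows "q x = (\<Sum>j=1..k div 2.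
    Wfun 0 1 k q ((2 * real j - 1) * stp k + x) - Wfun 0 1 k q ((2 * real j - 1) * stp k - x))"
proof -
  obtain n where k: "k = 2 * n" "n \<ge> 1" using assms(1,2) evenE by fastforce
  then have n: "k div 2 = n" by simp
  note plus = Wfun_node_plus[OF assms(2-4), where \<alpha> = 0 and \<beta> = 1 and q = q]
  note minus = Wfun_node_minus[OF assms(2-4), where \<alpha> = 0 and \<beta> = 1 and q = q]
  let ?A = "\<lambda>i. Aapp 0 1 k (Rop k q) i (stp k - x)"
  have "Wfun 0 1 k q ((2 * real j - 1) * stp k + x) - Wfun 0 1 k q ((2 * real j - 1) * stp k - x)
      = (?A (2 * j) - ?A (2 * j - 1)) / 2" if "j \<ge> 1" for j
  proof -
    have pt: "2 * real j - 1 = real (2 * j - 1)" and "Suc (2 * j - 1) = 2 * j" "1 \<le> 2 * j - 1"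
      using that by (simp_all add: of_nat_diff)
    then show ?thesis
      unfolding pt plus minus[OF \<open>1 \<le> 2 * j - 1\<close>] by (simp add: diff_divide_distrib)
  qed
  then have "(\<Sum>j=1..k div 2.
      Wfun 0 1 k q ((2 * real j - 1) * stp k + x) - Wfun 0 1 k q ((2 * real j - 1) * stp k - x))
    = (\<Sum>j=1..n. ?A (2 * j) - ?A (2 * j - 1)) / 2"
    unfolding n sum_divide_distrib by (intro sum.cong refl) simp
  also have "\<dots> = Rop k q k (stp k - x)"
    using Aapp_01_even_recovers_last[OF k] by simp
  finally show ?thesis
    using Rop_last[OF assms(2), of q x] k by simp
qed

lemma reconstruction_10_even:
  assumes "even k" "k \<ge> 1" "0 < x" "x < stp k"
  shows "q x = (\<Sum>j=1..k div 2. (-1) ^ j *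
    (Wfun 1 0 k q ((real k + 1 - 2 * real j) * stp k - x)
     + Wfun 1 0 k q ((real k + 1 - 2 * real j) * stp k + x)))"
proof -
  obtain n where k: "k = 2 * n" "n \<ge> 1" using assms(1,2) evenE by fastforce
  then have n: "k div 2 = n" by simp
  note plus = Wfun_node_plus[OF assms(2-4), where \<alpha> = 1 and \<beta> = 0 and q = q]
  note minus = Wfun_node_minus[OF assms(2-4), where \<alpha> = 1 and \<beta> = 0 and q = q]
  let ?A = "\<lambda>i. Aapp 1 0 k (Rop k q) i (stp k - x)"
  have "(-1) ^ j * (Wfun 1 0 k q ((real k + 1 - 2 * real j) * stp k - x)
        + Wfun 1 0 k q ((real k + 1 - 2 * real j) * stp k + x))
      = (-1) ^ j * (?A (2 * (n - j) + 1) + ?A (2 * (n - j) + 2)) / 2" if "j \<le> n" for j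
  proof -
    have pt: "real k + 1 - 2 * real j = real (2 * (n - j) + 1)"
      using that k by (simp add: of_nat_diff)
    show ?thesis
      unfolding pt plus minus[where m = "2 * (n - j) + 1", OF le_add2] by (simp add: algebra_simps)
  qed
  then have "(\<Sum>j=1..k div 2. (-1) ^ j *
      (Wfun 1 0 k q ((real k + 1 - 2 * real j) * stp k - x)
       + Wfun 1 0 k q ((real k + 1 - 2 * real j) * stp k + x)))
    = (\<Sum>j=1..n. (-1) ^ j * (?A (2 * (n - j) + 1) + ?A (2 * (n - j) + 2))) / 2"
    unfolding n sum_divide_distrib by (intro sum.cong refl) simp
  also have "\<dots> = Rop k q k (stp k - x)"
    using Aapp_10_even_recovers_last[OF k] by simp
  finally show ?thesis
    using Rop_last[OF assms(2), of q x] k by simp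
qed

lemma reconstruction_11_odd:
  assumes "odd k" "0 < x" "x < stp k"
  shows "q x = (-1) ^ ((k + 1) div 2) * (Wfun 1 1 k q x + (\<Sum>j=1..(k - 1) div 2. (-1) ^ j *
    (Wfun 1 1 k q (2 * real j * stp k + x) + Wfun 1 1 k q (2 * real j * stp k - x))))"
proof -
  obtain n where k: "k = 2 * n + 1" using assms(1) oddE by blast
  then have "k \<ge> 1" and n: "(k - 1) div 2 = n" "(k + 1) div 2 = Suc n" by simp_all
  note plus = Wfun_node_plus[OF \<open>k \<ge> 1\<close> assms(2,3), where \<alpha> = 1 and \<beta> = 1 and q = q]
  note minus = Wfun_node_minus[OF \<open>k \<ge> 1\<close> assms(2,3), where \<alpha> = 1 and \<beta> = 1 and q = q]
  let ?A = "\<lambda>i. Aapp 1 1 k (Rop k q) i x"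
  have centre: "Wfun 1 1 k q x = - ?A 1 / 2"
    using plus[where m = 0] by simp
  have "(-1) ^ j * (Wfun 1 1 k q (2 * real j * stp k + x) + Wfun 1 1 k q (2 * real j * stp k - x))
      = - ((-1) ^ j * (?A (2 * j + 1) + ?A (2 * j))) / 2" if "j \<ge> 1" for j
  proof -
    have pts: "2 * real j * stp k + x = real (2 * j) * stp k + x"
      "2 * real j * stp k - x = real (2 * j) * stp k - x"
      by simp_all
    have "1 \<le> 2 * j" using that by simp
    then show ?thesis
      unfolding pts plus minus[OF \<open>1 \<le> 2 * j\<close>] by (simp add: algebra_simps)
  qed
  then have "(\<Sum>j=1..n. (-1) ^ j *
      (Wfun 1 1 k q (2 * real j * stp k + x) + Wfun 1 1 k q (2 * real j * stp k - x)))
    = - (\<Sum>j=1..n. (-1) ^ j * (?A (2 * j + 1) + ?A (2 * j))) / 2"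
    unfolding sum_divide_distrib sum_negf[symmetric] by (intro sum.cong refl) simp
  then have "Wfun 1 1 k q x + (\<Sum>j=1..(k - 1) div 2. (-1) ^ j *
      (Wfun 1 1 k q (2 * real j * stp k + x) + Wfun 1 1 k q (2 * real j * stp k - x)))
    = - (?A 1 + (\<Sum>j=1..n. (-1) ^ j * (?A (2 * j + 1) + ?A (2 * j)))) / 2"
    unfolding n centre by (simp add: add_divide_distrib)
  also have "\<dots> = (-1) ^ Suc n * Rop k q k x"
    using Aapp_11_odd_recovers_last[OF k] by simp
  finally show ?thesis
    unfolding n(2) using Rop_last[OF \<open>k \<ge> 1\<close>, of q x] k by simp
qed

theorem lemma3p2:
  fixes k \<alpha> \<beta> :: nat and q :: "real \<Rightarrow> complex"
  assumes "k \<ge> 1" and "\<alpha> \<in> {0,1}" and "\<beta> \<in> {0,1}"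
    and "in_L2 q 0 pi"
    and "nondegenerate \<alpha> \<beta> k"
  shows
    "(\<alpha> = 0 \<and> \<beta> = 1 \<and> odd k \<longrightarrow>
       (AE x in lborel. x \<in> {0<..<stp k} \<longrightarrow>
          q x = Wfun 0 1 k q x + (\<Sum>j=1..(k - 1) div 2.
                 Wfun 0 1 k q (2 * real j * stp k + x) - Wfun 0 1 k q (2 * real j * stp k - x))))
   \<and> (\<alpha> = 0 \<and> \<beta> = 1 \<and> even k \<longrightarrow>
       (AE x in lborel. x \<in> {0<..<stp k} \<longrightarrow>
          q x = (\<Sum>j=1..k div 2.
                 Wfun 0 1 k q ((2 * real j - 1) * stp k + x) - Wfun 0 1 k q ((2 * real j - 1) * stp k - x))))
   \<and> (\<alpha> = 1 \<and> \<beta> = 0 \<and> even k \<longrightarrow>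
       (AE x in lborel. x \<in> {0<..<stp k} \<longrightarrow>
          q x = (\<Sum>j=1..k div 2. (-1) ^ j *
                 (Wfun 1 0 k q ((real k + 1 - 2 * real j) * stp k - x)
                  + Wfun 1 0 k q ((real k + 1 - 2 * real j) * stp k + x)))))
   \<and> (\<alpha> = 1 \<and> \<beta> = 1 \<and> odd k \<longrightarrow>
       (AE x in lborel. x \<in> {0<..<stp k} \<longrightarrow>
          q x = (-1) ^ ((k + 1) div 2) * (Wfun 1 1 k q x + (\<Sum>j=1..(k - 1) div 2. (-1) ^ j *
                 (Wfun 1 1 k q (2 * real j * stp k + x) + Wfun 1 1 k q (2 * real j * stp k - x))))))"
proof -
  have everywhere: "AE x in lborel. x \<in> {0<..<stp k} \<longrightarrow> P x"
    if "\<And>x. 0 < x \<Longrightarrow> x < stp k \<Longrightarrow> P x" for P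
    using that by (intro AE_I2) auto
  show ?thesis
    using assms(1)
    by (intro conjI impI everywhere)
      (blast intro: reconstruction_01_odd reconstruction_01_even reconstruction_10_even reconstruction_11_odd)+
qed

end
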